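(* Let $Z=Z(t)$ be the unique formal power series in $t$ with constant term $0$ satisfying $Z=t\frac{(1+Z)^4}{1+Z^2}$. Then $Z$ has non-negative integer coefficients and radius of convergence $1/8$, and can be continued analytically to the domain $\mathcal{D}=\mathbb{C}\setminus[1/8,+\infty)$. Near $t=1/8$, $$Z(t)=1-2(1-8t)^{1/4}+O(\sqrt{1-8t}).$$ Moreover $|Z(t)|<1$ on $\mathcal{D}$. More precisely, the only roots of unity that are accumulation points of $Z(\mathcal{D})$ are $1$ and $-1$, and they are approached by $Z(t)$ only when $t\to1/8$ and when $|t|\to\infty$, respectively. *)

theory Defs
  imports "HOL-Analysis.Analysis" "HOL-Analysis.FPS_Convergence" "HOL-Library.Landau_Symbols"
begin

definition Zeq :: "complex fps \<Rightarrow> bool" where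
  "Zeq Z \<longleftrightarrow> fps_nth Z 0 = 0 \<and> Z = fps_X * (1 + Z) ^ 4 / (1 + Z ^ 2)"

definition Zser :: "complex fps" where
  "Zser = (THE Z. Zeq Z)"

definition slitD :: "complex set" where
  "slitD = - {complex_of_real x | x. x \<ge> 1/8}"

end

theory Submission
  imports Defs "HOL-Complex_Analysis.Complex_Analysis"
begin

(* Writing Z = (1 - W)/(1 + W), the identity (1 + Z)^4 - (1 - Z)^4 = 8 Z (1 + Z^2) turns the
   equation into t = (1 - W^4)/8, so the solution is Z = (1 - W)/(1 + W) with W the principal
   value of (1 - 8t)^(1/4). On the slit plane Re W^2 > 0. This gives |Z| < 1 and
   Z = 1 - 2W + O(W^2); and since the Cayley transform maps the unit circle onto the imaginary
   axis, Z can approach the unit circle only as W -> 0 (Z -> 1, t -> 1/8) or W -> infinity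
   (Z -> -1, |t| -> infinity). The coefficients are natural numbers because B = Z/(1 + Z^2)
   satisfies B = t (1 + 2B)^2 and Z = t (1 + 2B)^2 (1 + Z^2). *)

section \<open>The formal power series\<close>

lemma Zeq_iff: "Zeq Z \<longleftrightarrow> fps_nth Z 0 = 0 \<and> Z * (1 + Z^2) = fps_X * (1 + Z) ^ 4"
proof -
  have "fps_X * (1 + Z) ^ 4 / (1 + Z^2) = Z \<longleftrightarrow> fps_X * (1 + Z) ^ 4 = Z * (1 + Z^2)"
    if "fps_nth Z 0 = 0"
  proof (rule dvd_div_eq_mult)
    have unit: "fps_nth (1 + Z^2) 0 \<noteq> 0"
      using that by (simp add: power2_eq_square)
    then show "1 + Z^2 \<noteq> 0" by (metis fps_zero_nth)
    show "1 + Z^2 dvd fps_X * (1 + Z) ^ 4" using unit by simp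
  qed
  then show ?thesis unfolding Zeq_def by auto
qed

lemma Zeq_unique:
  assumes "Zeq Z1" and "Zeq Z2"
  shows "Z1 = Z2"
proof -
  define P where "P = (1 + Z1)^3 + (1 + Z1)^2 * (1 + Z2) + (1 + Z1) * (1 + Z2)^2 + (1 + Z2)^3"
  define Q where "Q = Z1^2 + Z1 * Z2 + Z2^2"
  have "Z1 = fps_X * (1 + Z1) ^ 4 - Z1^3" and "Z2 = fps_X * (1 + Z2) ^ 4 - Z2^3"
    using assms by (auto simp: Zeq_iff algebra_simps power2_eq_square power3_eq_cube)
  then have "(Z1 - Z2) * (1 - fps_X * P + Q) = 0"
    unfolding P_def Q_def by algebra
  moreover have "fps_nth (1 - fps_X * P + Q) 0 = 1"
    using assms by (simp add: Zeq_def Q_def power2_eq_square)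
  then have "1 - fps_X * P + Q \<noteq> 0" by (metis fps_zero_nth zero_neq_one)
  ultimately show ?thesis by simp
qed

lemma sum_in_Nats: "(\<And>x. x \<in> A \<Longrightarrow> f x \<in> \<nat>) \<Longrightarrow> sum f A \<in> \<nat>"
  by (induction A rule: infinite_finite_induct) auto

lemma fps_mult_nth_in_Nats:
  assumes "\<And>i. i \<le> n \<Longrightarrow> fps_nth f i \<in> \<nat>" and "\<And>i. i \<le> n \<Longrightarrow> fps_nth g i \<in> \<nat>"
  shows "fps_nth (f * g) n \<in> \<nat>"
  using assms unfolding fps_mult_nth by (intro sum_in_Nats Nats_mult) auto

lemma fps_nth_in_Nats_X_mult:
  assumes F: "F = fps_X * G"
    and G: "\<And>m. (\<And>i. i \<le> m \<Longrightarrow> fps_nth F i \<in> \<nat>) \<Longrightarrow> fps_nth G m \<in> \<nat>"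
  shows "fps_nth F n \<in> \<nat>"
proof (induction n rule: less_induct)
  case (less n)
  show ?case
  proof (cases n)
    case 0
    then show ?thesis by (subst F) simp
  next
    case (Suc m)
    have "fps_nth G m \<in> \<nat>" using less Suc by (intro G) auto
    then show ?thesis using Suc by (subst F) simp
  qed
qed

lemma Zeq_coeffs_in_Nats:
  assumes "Zeq Z"
  shows "fps_nth Z n \<in> \<nat>"
proof -
  have Z0: "fps_nth Z 0 = 0" and eq: "Z * (1 + Z^2) = fps_X * (1 + Z) ^ 4"
    using assms by (auto simp: Zeq_iff)
  define U where "U = 1 + Z^2"
  define B where "B = Z / U"
  have "fps_nth U 0 \<noteq> 0" using Z0 by (simp add: U_def power2_eq_square)
  then have U: "U \<noteq> 0" and BU: "Z = B * U"
    by (auto simp: B_def)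
  have "U^2 * B = U^2 * (fps_X * (1 + 2 * B)^2)"
  proof -
    have "U^2 * B = U * Z" using BU by (simp add: power2_eq_square algebra_simps)
    also have "\<dots> = fps_X * (U + 2 * Z)^2"
      using eq by (simp add: U_def algebra_simps power2_eq_square power4_eq_xxxx)
    also have "\<dots> = U^2 * (fps_X * (1 + 2 * B)^2)"
      unfolding BU by (simp add: algebra_simps power2_eq_square)
    finally show ?thesis .
  qed
  then have B: "B = fps_X * ((1 + 2 * B) * (1 + 2 * B))"
    using U by (simp add: power2_eq_square)
  have one_plus_2B_Nats: "fps_nth (1 + 2 * B) i \<in> \<nat>" if "fps_nth B i \<in> \<nat>" for i
    using that by (simp add: numeral_fps_const)
  have B_Nats: "fps_nth B i \<in> \<nat>" for i
    using B by (rule fps_nth_in_Nats_X_mult) (intro fps_mult_nth_in_Nats one_plus_2B_Nats; blast)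
  have sq_Nats: "fps_nth (1 + Z * Z) i \<in> \<nat>" if "\<And>j. j \<le> i \<Longrightarrow> fps_nth Z j \<in> \<nat>" for i
    using fps_mult_nth_in_Nats[of i Z Z] that by simp
  have "Z = B * (1 + Z * Z)"
    using BU unfolding U_def power2_eq_square .
  also have "\<dots> = fps_X * ((1 + 2 * B) * (1 + 2 * B) * (1 + Z * Z))"
    by (subst B) (simp only: mult.assoc)
  finally show ?thesis
    by (rule fps_nth_in_Nats_X_mult) (intro fps_mult_nth_in_Nats one_plus_2B_Nats B_Nats sq_Nats; simp)
qed

lemma less_fps_conv_radius_mult:
  fixes f g :: "'a :: {banach, real_normed_div_algebra} fps"
  shows "r < fps_conv_radius f \<Longrightarrow> r < fps_conv_radius g \<Longrightarrow> r < fps_conv_radius (f * g)"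
  using fps_conv_radius_mult[of f g] by (meson less_le_trans min_less_iff_conj)

lemma less_fps_conv_radius_add:
  fixes f g :: "'a :: {banach, real_normed_div_algebra} fps"
  shows "r < fps_conv_radius f \<Longrightarrow> r < fps_conv_radius g \<Longrightarrow> r < fps_conv_radius (f + g)"
  using fps_conv_radius_add[of f g] by (meson less_le_trans min_less_iff_conj)

text \<open>Evaluating the equation at 1/8 forces Z = 1, and at that point the derivative of the
  equation reads 4 Z' = 16 + 4 Z'.\<close>

lemma Zeq_conv_radius_le:
  assumes "Zeq G"
  shows "fps_conv_radius G \<le> ereal (1/8)"
proof (rule ccontr)
  define z :: complex where "z = 1/8"
  assume "\<not> ?thesis"
  then have R: "ereal (norm z) < fps_conv_radius G" by (simp add: z_def)
  moreover have "fps_conv_radius G \<le> fps_conv_radius (fps_deriv G)"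
    by (rule fps_conv_radius_deriv)
  ultimately have R': "ereal (norm z) < fps_conv_radius (fps_deriv G)" by simp
  have E: "G + G * G * G = fps_X * ((1 + G) * (1 + G) * (1 + G) * (1 + G))"
    using assms by (simp add: Zeq_iff algebra_simps power2_eq_square power4_eq_xxxx)
  define h where "h = eval_fps G z"
  define d where "d = eval_fps (fps_deriv G) z"
  have "h + h^3 = z * (1 + h)^4"
    using arg_cong[OF E, of "\<lambda>f. eval_fps f z"] R
    by (simp add: h_def eval_fps_mult eval_fps_add less_fps_conv_radius_mult less_fps_conv_radius_add)
      (simp add: power3_eq_cube power4_eq_xxxx)
  then have "(h - 1)^4 = 0" unfolding z_def by algebra
  then have "h = 1" by simp
  have "d * (1 + 3 * h^2) = (1 + h)^4 + 4 * z * (1 + h)^3 * d"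
    using arg_cong[OF E, of "\<lambda>f. eval_fps (fps_deriv f) z"] R R'
    by (simp add: h_def d_def eval_fps_mult eval_fps_add less_fps_conv_radius_mult
        less_fps_conv_radius_add) algebra
  with \<open>h = 1\<close> show False unfolding z_def by simp
qed

section \<open>The explicit solution on the slit plane\<close>

lemma slitD_iff: "t \<in> slitD \<longleftrightarrow> 1 - 8 * t \<notin> \<real>\<^sub>\<le>\<^sub>0"
proof -
  have "t \<notin> slitD \<longleftrightarrow> Im t = 0 \<and> Re t \<ge> 1/8"
    unfolding slitD_def by (auto simp: complex_eq_iff intro!: exI[of _ "Re t"])
  moreover have "1 - 8 * t \<in> \<real>\<^sub>\<le>\<^sub>0 \<longleftrightarrow> Im t = 0 \<and> Re t \<ge> 1/8"
    by (auto simp: complex_nonpos_Reals_iff)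
  ultimately show ?thesis by blast
qed

lemma ball_subset_slitD: "ball 0 (1/8) \<subseteq> slitD"
proof
  fix t :: complex
  assume "t \<in> ball 0 (1/8)"
  then have "Re t < 1/8" using complex_Re_le_cmod[of t] by simp
  then show "t \<in> slitD" by (simp add: slitD_iff complex_nonpos_Reals_iff)
qed

lemma Re_powr_gt_0:
  fixes z :: complex and a :: real
  assumes z: "z \<notin> \<real>\<^sub>\<le>\<^sub>0" and "0 \<le> a" "a \<le> 1/2"
  shows "Re (z powr of_real a) > 0"
proof -
  have "z \<noteq> 0" using z by auto
  have "\<bar>Im (Ln z)\<bar> < pi"
    using Im_Ln_less_pi[OF z] mpi_less_Im_Ln[OF \<open>z \<noteq> 0\<close>] by linarith
  moreover have "\<bar>a * Im (Ln z)\<bar> \<le> \<bar>Im (Ln z)\<bar> / 2"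
    using assms(2,3) mult_right_mono[of a "1/2" "\<bar>Im (Ln z)\<bar>"] by (simp add: abs_mult)
  ultimately have "\<bar>a * Im (Ln z)\<bar> < pi / 2" by linarith
  then have "cos (a * Im (Ln z)) > 0" by (intro cos_gt_zero_pi) auto
  moreover have "Re (z powr of_real a) = exp (a * Re (Ln z)) * cos (a * Im (Ln z))"
    using \<open>z \<noteq> 0\<close> by (simp add: powr_def Re_exp)
  ultimately show ?thesis by simp
qed

definition W :: "complex \<Rightarrow> complex" where
  "W t = (1 - 8 * t) powr (1/4)"

definition Zfun :: "complex \<Rightarrow> complex" where
  "Zfun t = (1 - W t) / (1 + W t)"

lemma W_power: "W t ^ 4 = 1 - 8 * t" "W t ^ 2 = (1 - 8 * t) powr (1/2)"
  by (cases "1 - 8 * t = 0"; simp add: W_def powr_power)+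

lemma Re_W_gt_0: "t \<in> slitD \<Longrightarrow> Re (W t) > 0"
  using Re_powr_gt_0[of "1 - 8 * t" "1/4"] by (simp add: W_def slitD_iff)

lemma Re_W_sq_gt_0: "t \<in> slitD \<Longrightarrow> Re (W t ^ 2) > 0"
  using Re_powr_gt_0[of "1 - 8 * t" "1/2"] by (simp add: W_power slitD_iff)

lemma one_plus_W_nonzero: "t \<in> slitD \<Longrightarrow> 1 + W t \<noteq> 0"
  using Re_W_gt_0[of t] by (auto simp: complex_eq_iff)

lemma W_holomorphic: "W holomorphic_on slitD"
  unfolding W_def by (intro holomorphic_intros) (auto simp: slitD_iff)

lemma Zfun_holomorphic: "Zfun holomorphic_on slitD"
  unfolding Zfun_def[abs_def] using one_plus_W_nonzero
  by (intro holomorphic_intros W_holomorphic) auto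

lemma cayley_involutive:
  fixes w :: "'a :: field_char_0"
  assumes "1 + w \<noteq> 0"
  shows "1 + (1 - w) / (1 + w) \<noteq> 0" and "(1 - (1 - w) / (1 + w)) / (1 + (1 - w) / (1 + w)) = w"
proof -
  have "1 + (1 - w) / (1 + w) = 2 / (1 + w)" and "1 - (1 - w) / (1 + w) = 2 * w / (1 + w)"
    using assms by (simp_all add: field_simps)
  then show "1 + (1 - w) / (1 + w) \<noteq> 0" and "(1 - (1 - w) / (1 + w)) / (1 + (1 - w) / (1 + w)) = w"
    using assms by simp_all
qed

lemma one_plus_Zfun_nonzero: "t \<in> slitD \<Longrightarrow> 1 + Zfun t \<noteq> 0"
  unfolding Zfun_def by (rule cayley_involutive(1)[OF one_plus_W_nonzero])

lemma W_eq_Zfun: "t \<in> slitD \<Longrightarrow> W t = (1 - Zfun t) / (1 + Zfun t)"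
  unfolding Zfun_def by (rule cayley_involutive(2)[OF one_plus_W_nonzero, symmetric])

lemma Zfun_equation:
  assumes "t \<in> slitD"
  shows "Zfun t * (1 + Zfun t ^ 2) = t * (1 + Zfun t) ^ 4"
proof -
  define z where "z = Zfun t"
  have "1 - z = W t * (1 + z)"
    using W_eq_Zfun[OF assms] one_plus_Zfun_nonzero[OF assms] by (simp add: z_def field_simps)
  then have "(1 - z)^4 = (1 - 8 * t) * (1 + z)^4"
    by (simp add: power_mult_distrib W_power)
  have "8 * (z * (1 + z^2)) = (1 + z)^4 - (1 - z)^4"
    by algebra
  also have "\<dots> = 8 * (t * (1 + z)^4)"
    using \<open>(1 - z)^4 = (1 - 8 * t) * (1 + z)^4\<close> by (simp add: algebra_simps)
  finally show ?thesis unfolding z_def by simp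
qed

lemma norm_Zfun_less_1:
  assumes "t \<in> slitD"
  shows "norm (Zfun t) < 1"
proof -
  have "norm (1 - W t) < norm (1 + W t)"
    using Re_W_gt_0[OF assms] unfolding cmod_def
    by (intro real_sqrt_less_mono) (simp add: power2_eq_square algebra_simps)
  then show ?thesis
    using one_plus_W_nonzero[OF assms] by (simp add: Zfun_def norm_divide divide_less_eq)
qed

lemma Zfun_expansion_bound:
  assumes "t \<in> slitD"
  shows "norm (Zfun t - (1 - 2 * W t)) \<le> 2 * norm (W t ^ 2)"
proof -
  have "1 \<le> norm (1 + W t)"
    using Re_W_gt_0[OF assms] complex_Re_le_cmod[of "1 + W t"] by simp
  moreover have "(Zfun t - (1 - 2 * W t)) * (1 + W t) = 2 * W t ^ 2"
    using one_plus_W_nonzero[OF assms] by (simp add: Zfun_def field_simps power2_eq_square)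
  then have "norm (Zfun t - (1 - 2 * W t)) * norm (1 + W t) = 2 * norm (W t ^ 2)"
    by (metis norm_mult norm_numeral)
  ultimately show ?thesis
    using mult_left_mono[of 1 "norm (1 + W t)" "norm (Zfun t - (1 - 2 * W t))"] by simp
qed

lemma Zfun_bigo:
  "(\<lambda>t. Zfun t - (1 - 2 * (1 - 8 * t) powr (1/4)))
     \<in> O[at (1/8) within slitD](\<lambda>t. (1 - 8 * t) powr (1/2))"
proof (rule bigoI[where c = 2])
  show "\<forall>\<^sub>F t in at (1/8) within slitD.
          norm (Zfun t - (1 - 2 * (1 - 8 * t) powr (1/4))) \<le> 2 * norm ((1 - 8 * t) powr (1/2))"
    unfolding eventually_at_filter
    using Zfun_expansion_bound unfolding W_power(2)[symmetric] W_def[symmetric]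
    by (intro always_eventually) simp
qed

section \<open>Identification with the power series\<close>

lemma Zfun_holomorphic_on_disc: "Zfun holomorphic_on eball 0 (ereal (1/8))"
  using Zfun_holomorphic ball_subset_slitD by (simp add: holomorphic_on_subset)

lemma Zeq_fps_expansion_Zfun: "Zeq (fps_expansion Zfun 0)"
proof -
  define G where "G = fps_expansion Zfun 0"
  have G: "Zfun has_fps_expansion G"
    unfolding G_def using Zfun_holomorphic_on_disc
    by (intro has_fps_expansion_fps_expansion[OF open_ball]) simp_all
  have "eventually (\<lambda>t. t \<in> ball 0 (1/8)) (nhds (0::complex))"
    by (intro eventually_nhds_in_open) auto
  then have "eventually (\<lambda>t. Zfun t * (1 + Zfun t ^ 2) = t * (1 + Zfun t) ^ 4) (nhds 0)"
    by eventually_elim (intro Zfun_equation ball_subset_slitD[THEN subsetD])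
  moreover have "(\<lambda>t. t * (1 + Zfun t) ^ 4) has_fps_expansion fps_X * (1 + G) ^ 4"
    by (intro fps_expansion_intros G)
  ultimately have "(\<lambda>t. Zfun t * (1 + Zfun t ^ 2)) has_fps_expansion fps_X * (1 + G) ^ 4"
    by (subst has_fps_expansion_cong[OF _ refl])
  moreover have "(\<lambda>t. Zfun t * (1 + Zfun t ^ 2)) has_fps_expansion G * (1 + G ^ 2)"
    by (intro fps_expansion_intros G)
  ultimately have "G * (1 + G ^ 2) = fps_X * (1 + G) ^ 4"
    by (rule fps_expansion_unique_complex[rotated])
  moreover have "fps_nth G 0 = 0"
    using fps_nth_fps_expansion[OF G, of 0] by (simp add: Zfun_def W_def)
  ultimately show ?thesis by (simp add: Zeq_iff G_def)
qed

lemma Zser_eq_fps_expansion: "Zser = fps_expansion Zfun 0"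
  unfolding Zser_def using Zeq_fps_expansion_Zfun Zeq_unique by blast

lemma fps_conv_radius_Zser: "fps_conv_radius Zser = ereal (1/8)"
proof (rule antisym)
  show "fps_conv_radius Zser \<le> ereal (1/8)"
    using Zeq_fps_expansion_Zfun Zser_eq_fps_expansion Zeq_conv_radius_le by simp
  show "fps_conv_radius Zser \<ge> ereal (1/8)"
    unfolding Zser_eq_fps_expansion using Zfun_holomorphic_on_disc by (rule conv_radius_fps_expansion)
qed

lemma eval_fps_Zser: "t \<in> ball 0 (1/8) \<Longrightarrow> eval_fps Zser t = Zfun t"
  using eval_fps_expansion'[OF Zfun_holomorphic_on_disc] by (simp add: Zser_eq_fps_expansion)

section \<open>Boundary behaviour\<close>

lemma Zfun_real:
  fixes r :: real
  assumes "r > 0"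
  shows "complex_of_real ((1 - r^4) / 8) \<in> slitD"
    and "Zfun (complex_of_real ((1 - r^4) / 8)) = complex_of_real ((1 - r) / (1 + r))"
proof -
  have eq: "1 - 8 * complex_of_real ((1 - r^4) / 8) = complex_of_real (r^4)"
    by (simp add: field_simps)
  show "complex_of_real ((1 - r^4) / 8) \<in> slitD"
    unfolding slitD_iff eq using assms by (simp add: complex_nonpos_Reals_iff)
  have "(r^4) powr (1/4) = (r powr 4) powr (1/4)"
    using assms by simp
  also have "\<dots> = r powr (4 * (1/4))"
    by (rule powr_powr)
  also have "\<dots> = r"
    using assms by simp
  finally have "(r^4) powr (1/4) = r" .
  then have "W (complex_of_real ((1 - r^4) / 8)) = complex_of_real r"
    unfolding W_def eq using powr_of_real[of "r^4" "1/4"] assms by simp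
  then show "Zfun (complex_of_real ((1 - r^4) / 8)) = complex_of_real ((1 - r) / (1 + r))"
    unfolding Zfun_def by simp
qed

lemma of_real_islimpt_Zfun_image:
  fixes r :: "nat \<Rightarrow> real" and l :: real
  assumes "\<And>n. r n > 0" "\<And>n. (1 - r n) / (1 + r n) \<noteq> l" "(\<lambda>n. (1 - r n) / (1 + r n)) \<longlonglongrightarrow> l"
  shows "complex_of_real l islimpt (Zfun ` slitD)"
  unfolding islimpt_sequential
proof (intro exI[of _ "\<lambda>n. complex_of_real ((1 - r n) / (1 + r n))"] conjI allI)
  fix n
  show "complex_of_real ((1 - r n) / (1 + r n)) \<in> Zfun ` slitD - {complex_of_real l}"
    using Zfun_real[OF assms(1)] assms(2) by (metis DiffI image_eqI of_real_eq_iff singletonD)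
qed (use assms(3) tendsto_of_real in blast)

lemma islimpt_Zfun_1: "1 islimpt (Zfun ` slitD)"
proof -
  have "(\<lambda>n. (1 - inverse (real (Suc n))) / (1 + inverse (real (Suc n)))) \<longlonglongrightarrow> (1 - 0) / (1 + 0)"
    by (intro tendsto_intros LIMSEQ_inverse_real_of_nat) simp
  then have "complex_of_real 1 islimpt (Zfun ` slitD)"
    by (intro of_real_islimpt_Zfun_image[where r = "\<lambda>n. inverse (real (Suc n))"])
      (simp_all add: divide_eq_1_iff)
  then show ?thesis by simp
qed

lemma islimpt_Zfun_minus1: "-1 islimpt (Zfun ` slitD)"
proof -
  have "(1 - real (Suc n)) / (1 + real (Suc n)) =
      (inverse (real (Suc n)) - 1) / (inverse (real (Suc n)) + 1)" for n
    by (simp add: divide_simps)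
  moreover have "(\<lambda>n. (inverse (real (Suc n)) - 1) / (inverse (real (Suc n)) + 1)) \<longlonglongrightarrow> (0 - 1) / (0 + 1)"
    by (intro tendsto_intros LIMSEQ_inverse_real_of_nat) simp
  ultimately have "complex_of_real (-1) islimpt (Zfun ` slitD)"
    by (intro of_real_islimpt_Zfun_image[where r = "\<lambda>n. real (Suc n)"]) (simp_all add: divide_simps)
  then show ?thesis by simp
qed

lemma Re_cayley_unit_circle:
  fixes z :: complex
  assumes "norm z = 1" "z \<noteq> -1"
  shows "Re ((1 - z) / (1 + z)) = 0"
proof -
  have "Re z ^ 2 + Im z ^ 2 = 1" using assms(1) cmod_power2[of z] by simp
  then show ?thesis by (simp add: Re_divide algebra_simps power2_eq_square)
qed

lemma Zfun_limit_on_unit_circle: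
  assumes s: "\<And>n. s n \<in> slitD" and lim: "(\<lambda>n. Zfun (s n)) \<longlonglongrightarrow> z" and "norm z = 1"
  shows "z = 1 \<or> z = -1"
proof (rule disjCI)
  assume "z \<noteq> -1"
  then have "1 + z \<noteq> 0" by (metis add.commute add_eq_0_iff)
  define w where "w = (1 - z) / (1 + z)"
  have "(\<lambda>n. W (s n)) \<longlonglongrightarrow> w"
    unfolding W_eq_Zfun[OF s] w_def using \<open>1 + z \<noteq> 0\<close> by (intro tendsto_intros lim)
  then have "(\<lambda>n. Re (W (s n) ^ 2)) \<longlonglongrightarrow> Re (w ^ 2)" by (intro tendsto_intros)
  then have "0 \<le> Re (w ^ 2)"
    using Re_W_sq_gt_0[OF s] by (intro tendsto_lowerbound always_eventually) (auto intro: less_imp_le)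
  moreover have "Re w = 0"
    unfolding w_def using Re_cayley_unit_circle \<open>norm z = 1\<close> \<open>z \<noteq> -1\<close> by blast
  ultimately have "w = 0"
    by (simp add: complex_eq_iff power2_eq_square) (meson mult_le_0_iff order_antisym)
  then show "z = 1" using \<open>1 + z \<noteq> 0\<close> by (simp add: w_def)
qed

lemma roots_of_unity_islimpt_Zfun:
  "{w. (\<exists>n>0. w ^ n = 1) \<and> w islimpt (Zfun ` slitD)} = {1, -1}"
proof (intro equalityI subsetI)
  fix w assume "w \<in> {w. (\<exists>n>0. w ^ n = 1) \<and> w islimpt (Zfun ` slitD)}"
  then obtain n where "n > 0" "w ^ n = 1" and "w islimpt (Zfun ` slitD)" by blast
  then have "norm w = 1" using power_eq_1_iff by blast
  obtain f where f: "\<And>n. f n \<in> Zfun ` slitD - {w}" "f \<longlonglongrightarrow> w"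
    using \<open>w islimpt (Zfun ` slitD)\<close> unfolding islimpt_sequential by blast
  then have "\<forall>n. \<exists>t. t \<in> slitD \<and> f n = Zfun t" by blast
  then obtain s where s: "\<And>n. s n \<in> slitD" "\<And>n. f n = Zfun (s n)" by metis
  have "(\<lambda>n. Zfun (s n)) \<longlonglongrightarrow> w"
    using f(2) by (simp add: s(2)[symmetric])
  then show "w \<in> {1, -1}"
    using Zfun_limit_on_unit_circle[of s w] s(1) \<open>norm w = 1\<close> by blast
next
  fix w :: complex assume w: "w \<in> {1, -1}"
  have "\<exists>n>0. w ^ n = 1"
    using w by (intro exI[of _ "2::nat"]) auto
  then show "w \<in> {w. (\<exists>n>0. w ^ n = 1) \<and> w islimpt (Zfun ` slitD)}"
    using w islimpt_Zfun_1 islimpt_Zfun_minus1 by auto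
qed

lemma Zfun_tendsto_1_imp:
  assumes s: "\<And>n. s n \<in> slitD" and lim: "(\<lambda>n. Zfun (s n)) \<longlonglongrightarrow> 1"
  shows "s \<longlonglongrightarrow> 1/8"
proof -
  have "(\<lambda>n. W (s n)) \<longlonglongrightarrow> (1 - 1) / (1 + 1)"
    unfolding W_eq_Zfun[OF s] by (intro tendsto_intros lim) simp
  then have "(\<lambda>n. (1 - W (s n) ^ 4) / 8) \<longlonglongrightarrow> (1 - ((1 - 1) / (1 + 1)) ^ 4) / 8"
    by (intro tendsto_intros) simp_all
  then show ?thesis by (simp add: W_power)
qed

lemma Zfun_tendsto_minus1_imp:
  assumes s: "\<And>n. s n \<in> slitD" and lim: "(\<lambda>n. Zfun (s n)) \<longlonglongrightarrow> -1"
  shows "filterlim (\<lambda>n. cmod (s n)) at_top sequentially"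
proof -
  have "(\<lambda>n. 1 + Zfun (s n)) \<longlonglongrightarrow> 1 + -1"
    by (intro tendsto_intros lim)
  then have "filterlim (\<lambda>n. 1 + Zfun (s n)) (at 0) sequentially"
    using one_plus_Zfun_nonzero[OF s] by (intro filterlim_atI) simp_all
  then have "filterlim (\<lambda>n. inverse (1 + Zfun (s n))) at_infinity sequentially"
    by (rule filterlim_compose[OF filterlim_inverse_at_infinity])
  moreover have "(\<lambda>n. 1 - Zfun (s n)) \<longlonglongrightarrow> 1 - -1"
    by (intro tendsto_intros lim)
  ultimately have "filterlim (\<lambda>n. W (s n)) at_infinity sequentially"
    unfolding W_eq_Zfun[OF s] divide_inverse
    by (intro tendsto_mult_filterlim_at_infinity[where c = 2]) simp_all
  then have "filterlim (\<lambda>n. W (s n) ^ 4) at_infinity sequentially"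
    by (rule Limits.filterlim_power_at_infinity) simp
  then have "filterlim (\<lambda>n. 1/8 + (- 1/8) * W (s n) ^ 4) at_infinity sequentially"
    by (intro tendsto_add_filterlim_at_infinity[OF tendsto_const]
        tendsto_mult_filterlim_at_infinity[OF tendsto_const]) simp_all
  moreover have "1/8 + (- 1/8) * W (s n) ^ 4 = s n" for n
    by (simp add: W_power field_simps)
  ultimately show ?thesis
    by (simp add: filterlim_at_infinity_conv_norm_at_top)
qed

theorem lemma11:
  shows "(\<exists>!Z. Zeq Z)
    \<and> (\<forall>n. fps_nth Zser n \<in> \<nat>)
    \<and> fps_conv_radius Zser = ereal (1/8)
    \<and> (\<exists>F. F holomorphic_on slitD
         \<and> (\<forall>t\<in>ball 0 (1/8). F t = eval_fps Zser t)
         \<and> (\<lambda>t. F t - (1 - 2 * (1 - 8 * t) powr (1/4)))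
              \<in> O[at (1/8) within slitD](\<lambda>t. (1 - 8 * t) powr (1/2))
         \<and> (\<forall>t\<in>slitD. cmod (F t) < 1)
         \<and> {w. (\<exists>n>0. w ^ n = 1) \<and> w islimpt (F ` slitD)} = {1, -1}
         \<and> (\<forall>s. (\<forall>n. s n \<in> slitD) \<longrightarrow> (\<lambda>n. F (s n)) \<longlonglongrightarrow> 1 \<longrightarrow> s \<longlonglongrightarrow> 1/8)
         \<and> (\<forall>s. (\<forall>n. s n \<in> slitD) \<longrightarrow> (\<lambda>n. F (s n)) \<longlonglongrightarrow> -1
                 \<longrightarrow> filterlim (\<lambda>n. cmod (s n)) at_top sequentially))"
proof -
  have Zeq_Zser: "Zeq Zser"
    using Zeq_fps_expansion_Zfun Zser_eq_fps_expansion by simp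
  show ?thesis
  proof (intro conjI exI[of _ Zfun] ballI allI impI)
    show "\<exists>!Z. Zeq Z" using Zeq_Zser Zeq_unique by blast
    show "fps_nth Zser n \<in> \<nat>" for n using Zeq_Zser by (rule Zeq_coeffs_in_Nats)
    show "fps_conv_radius Zser = ereal (1/8)" by (rule fps_conv_radius_Zser)
    show "Zfun holomorphic_on slitD" by (rule Zfun_holomorphic)
    show "Zfun t = eval_fps Zser t" if "t \<in> ball 0 (1/8)" for t
      using that by (simp add: eval_fps_Zser)
    show "(\<lambda>t. Zfun t - (1 - 2 * (1 - 8 * t) powr (1/4)))
        \<in> O[at (1/8) within slitD](\<lambda>t. (1 - 8 * t) powr (1/2))" by (rule Zfun_bigo)
    show "cmod (Zfun t) < 1" if "t \<in> slitD" for t using that by (rule norm_Zfun_less_1)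
    show "{w. (\<exists>n>0. w ^ n = 1) \<and> w islimpt (Zfun ` slitD)} = {1, -1}"
      by (rule roots_of_unity_islimpt_Zfun)
    show "s \<longlonglongrightarrow> 1/8" if "\<forall>n. s n \<in> slitD" "(\<lambda>n. Zfun (s n)) \<longlonglongrightarrow> 1" for s
      using that(1) by (intro Zfun_tendsto_1_imp[OF _ that(2)]) blast
    show "filterlim (\<lambda>n. cmod (s n)) at_top sequentially"
      if "\<forall>n. s n \<in> slitD" "(\<lambda>n. Zfun (s n)) \<longlonglongrightarrow> -1" for s
      using that(1) by (intro Zfun_tendsto_minus1_imp[OF _ that(2)]) blast
  qed
qed

end
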